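(* Let $f\in\mathbf{R}_\ell$, written as $f(z)=\ell z+R(e^{2\pi iz})$ with $\ell\in\mathbb{Z}$ and $R$ a non-constant rational map with $R(0)\neq\infty$, $R(\infty)\neq\infty$, and let $g(w)=w^\ell e^{2\pi iR(w)}$ be its exponential projection. Then $g$ is of finite type with $\mathcal{AV}(g)=\{0,\infty\}$ and $\mathcal{E}(g)=\exp_1(f^{-1}(\infty))$. Moreover: (i) if $\ell=1$, then $0$ and $\infty$ are fixed points of $g$ with multipliers $g'(0)=e^{2\pi iR(0)}$ and $g'(\infty)=e^{-2\pi iR(\infty)}$, while if $\ell\ge2$ both are fixed critical points; (ii) if $\ell=-1$, then $\{0,\infty\}$ is a $2$-cycle with multiplier $e^{2\pi i(R(\infty)-R(0))}$, while if $\ell\le-2$ it is a critical $2$-cycle; (iii) if $\ell=0$, then $0$ (resp. $\infty$) is a critical point of $g$ if and only if $R'(0)=0$ (resp. $R'(\infty)=0$).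
   Context: $\exp_1(z)=e^{2\pi iz}$. $\mathbf{R}_\ell$ is the class of functions $\ell z+R(e^{2\pi iz})$ with $R$ a non-constant rational map, $R(0)\neq\infty$, $R(\infty)\neq\infty$, $R^{-1}(\infty)\neq\emptyset$. $\mathcal{E}(g)$ is the set of essential singularities of $g$; $\mathcal{AV}(g)$ its asymptotic values (limits of $g$ along paths tending to points of $\mathcal{E}(g)$); $g$ is of finite type if its set of singular values (closure of critical and asymptotic values) is finite. Derivatives and multipliers at $\infty$ are taken in the local coordinate $1/w$. *)

theory Defs
  imports "HOL-Complex_Analysis.Complex_Analysis" "HOL-Computational_Algebra.Polynomial"
begin

text \<open>The Riemann sphere is modelled as complex option: Some z is the point z, None is infinity.\<close>

definition exp1 :: "complex \<Rightarrow> complex" where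
  "exp1 z = exp (2 * of_real pi * \<i> * z)"

text \<open>Rational function P/Q (junk value 0 at zeros of Q; only limits are ever used there).\<close>
definition ratf :: "complex poly \<Rightarrow> complex poly \<Rightarrow> complex \<Rightarrow> complex" where
  "ratf P Q w = poly P w / poly Q w"

definition fR :: "int \<Rightarrow> complex poly \<Rightarrow> complex poly \<Rightarrow> complex \<Rightarrow> complex" where
  "fR l P Q z = of_int l * z + ratf P Q (exp1 z)"

definition gproj :: "int \<Rightarrow> complex poly \<Rightarrow> complex poly \<Rightarrow> complex \<Rightarrow> complex" where
  "gproj l P Q w = w powi l * exp (2 * of_real pi * \<i> * ratf P Q w)"

definition sph_conv :: "('a \<Rightarrow> complex option) \<Rightarrow> complex option \<Rightarrow> 'a filter \<Rightarrow> bool" where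
  "sph_conv s q F = (case q of
      Some d \<Rightarrow> (\<forall>e>0. eventually (\<lambda>x. \<exists>z. s x = Some z \<and> dist z d < e) F)
    | None \<Rightarrow> (\<forall>M. eventually (\<lambda>x. case s x of None \<Rightarrow> True | Some z \<Rightarrow> M < norm z) F))"

definition pfilter :: "complex option \<Rightarrow> complex filter" where
  "pfilter p = (case p of Some c \<Rightarrow> at c | None \<Rightarrow> at_infinity)"

definition sph_ext :: "(complex \<Rightarrow> complex) \<Rightarrow> complex option \<Rightarrow> complex option" where
  "sph_ext g p = (THE q. sph_conv (\<lambda>w. Some (g w)) q (pfilter p))"

text \<open>Local coordinates: w near a finite point, 1/w near infinity.\<close>
definition chart_inv :: "complex option \<Rightarrow> complex \<Rightarrow> complex option" where
  "chart_inv p u = (case p of Some _ \<Rightarrow> Some u | None \<Rightarrow> (if u = 0 then None else Some (inverse u)))"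

definition chart :: "complex option \<Rightarrow> complex option \<Rightarrow> complex" where
  "chart q x = (case q of
      Some _ \<Rightarrow> (case x of Some y \<Rightarrow> y | None \<Rightarrow> 0)
    | None \<Rightarrow> (case x of None \<Rightarrow> 0 | Some y \<Rightarrow> inverse y))"

definition coord :: "complex option \<Rightarrow> complex" where
  "coord p = (case p of Some c \<Rightarrow> c | None \<Rightarrow> 0)"

definition sph_deriv :: "(complex option \<Rightarrow> complex option) \<Rightarrow> complex option \<Rightarrow> complex \<Rightarrow> bool" where
  "sph_deriv H p D = ((\<lambda>u. chart (H p) (H (chart_inv p u))) has_field_derivative D) (at (coord p))"

definition crit_pt :: "(complex option \<Rightarrow> complex option) \<Rightarrow> complex option \<Rightarrow> bool" where
  "crit_pt H p = sph_deriv H p 0"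

definition ess_sing_at :: "(complex \<Rightarrow> complex) \<Rightarrow> complex option \<Rightarrow> bool" where
  "ess_sing_at g p = (case p of
      Some z \<Rightarrow> isolated_singularity_at g z \<and> \<not> not_essential g z
    | None \<Rightarrow> isolated_singularity_at (\<lambda>u. g (inverse u)) 0 \<and> \<not> not_essential (\<lambda>u. g (inverse u)) 0)"

definition ess_sings :: "(complex \<Rightarrow> complex) \<Rightarrow> complex option set" where
  "ess_sings g = {p. ess_sing_at g p}"

definition asym_vals :: "(complex \<Rightarrow> complex) \<Rightarrow> complex option set" where
  "asym_vals g = {a. \<exists>(\<gamma>::real \<Rightarrow> complex) e. e \<in> ess_sings g \<and> continuous_on {0..<1} \<gamma> \<and>
      (\<forall>t\<in>{0..<1}. Some (\<gamma> t) \<notin> ess_sings g) \<and>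
      sph_conv (\<lambda>t. Some (\<gamma> t)) e (at_left 1) \<and>
      sph_conv (\<lambda>t. sph_ext g (Some (\<gamma> t))) a (at_left 1)}"

definition crit_vals :: "(complex \<Rightarrow> complex) \<Rightarrow> complex option set" where
  "crit_vals g = {sph_ext g p | p. p \<notin> ess_sings g \<and> crit_pt (sph_ext g) p}"

definition sph_closure :: "complex option set \<Rightarrow> complex option set" where
  "sph_closure S = {q. \<exists>s. (\<forall>n. s n \<in> S) \<and> sph_conv s q sequentially}"

definition finite_type :: "(complex \<Rightarrow> complex) \<Rightarrow> bool" where
  "finite_type g = finite (sph_closure (crit_vals g \<union> asym_vals g))"

end

theory Submission
  imports Defs "HOL-Computational_Algebra.Fundamental_Theorem_Algebra"
begin

(* Near 0 and \<infinity> the map g is w^l times the non-vanishing holomorphic factor exp (2 pi i R),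
   so the behaviour of {0, \<infinity>} and the multipliers follow from the product and chain rules.
   The other singularities of g are the poles w0 of R, and they are essential: along a radial
   path into a pole of order m, Re (2 pi i R) grows like K / (1 - t)^m, and the direction of the
   path fixes the sign of K, so g tends to 0 along one path and to \<infinity> along another.
   Conversely, a finite nonzero limit of g along a path into w0 would make the continuous
   logarithm 2 pi i R of g / w^l converge along the path, which the pole forbids; so the only
   asymptotic values are 0 and \<infinity>. Away from 0, \<infinity> and the poles, critical points of g are
   roots of l Q^2 + 2 pi i w (P'Q - PQ'); this polynomial is nonzero, since otherwise (w - w0)^m
   would divide Q' at a pole w0 of order m. *)

section \<open>Convergence on the Riemann sphere\<close>

lemma sph_conv_Some_iff:
  "sph_conv (\<lambda>x. Some (f x)) (Some d) F \<longleftrightarrow> (f \<longlongrightarrow> d) F"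
  unfolding sph_conv_def tendsto_iff by simp

lemma sph_conv_None_iff:
  "sph_conv (\<lambda>x. Some (f x)) None F \<longleftrightarrow> filterlim f at_infinity F"
  unfolding sph_conv_def filterlim_at_infinity_conv_norm_at_top filterlim_at_top_dense by simp

lemma sph_conv_SomeD:
  assumes "sph_conv s (Some d) F"
  shows "eventually (\<lambda>x. s x \<noteq> None) F" and "((\<lambda>x. the (s x)) \<longlongrightarrow> d) F"
proof -
  have near: "eventually (\<lambda>x. \<exists>z. s x = Some z \<and> dist z d < e) F" if "e > 0" for e
    using assms that unfolding sph_conv_def by simp
  show "eventually (\<lambda>x. s x \<noteq> None) F"
    using near[of 1] by (auto elim: eventually_mono)
  show "((\<lambda>x. the (s x)) \<longlongrightarrow> d) F"
    unfolding tendsto_iff by (auto elim!: eventually_mono[OF near])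
qed

lemma sph_conv_cong:
  assumes "eventually (\<lambda>x. s x = s' x) F" "sph_conv s q F"
  shows "sph_conv s' q F"
proof -
  have transfer: "eventually (\<lambda>x. P (s' x)) F" if "eventually (\<lambda>x. P (s x)) F" for P
    using assms(1) that by eventually_elim simp
  show ?thesis
    using assms(2) unfolding sph_conv_def
    by (cases q) (auto intro!: transfer[where P = "\<lambda>z. case z of None \<Rightarrow> True | Some y \<Rightarrow> _ < norm y"]
        transfer[where P = "\<lambda>z. \<exists>y. z = Some y \<and> dist y _ < _"])
qed

lemma sph_conv_unique:
  assumes "F \<noteq> bot" "sph_conv s q F" "sph_conv s q' F"
  shows "q = q'"
proof -
  have finite_and_infinite: False if "sph_conv s (Some d) F" "sph_conv s None F" for d
  proof -
    have "eventually (\<lambda>x. s x \<noteq> None \<and> dist (the (s x)) d < 1) F"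
      using eventually_conj[OF sph_conv_SomeD(1) tendstoD[OF sph_conv_SomeD(2)], OF that(1) that(1)]
      by simp
    moreover have "eventually (\<lambda>x. case s x of None \<Rightarrow> True | Some z \<Rightarrow> norm d + 1 < norm z) F"
      using that(2) unfolding sph_conv_def by simp
    ultimately have "eventually (\<lambda>x. False) F"
    proof eventually_elim
      case (elim x)
      then obtain z where "s x = Some z" "norm (z - d) < 1" "norm d + 1 < norm z"
        by (auto simp: dist_norm)
      then show False
        using norm_triangle_ineq2[of z d] by linarith
    qed
    then show False
      using assms(1) by (simp add: eventually_False)
  qed
  show ?thesis
    using assms(2,3) finite_and_infinite
      tendsto_unique[OF assms(1) sph_conv_SomeD(2) sph_conv_SomeD(2)]
    by (cases q; cases q') auto
qed

lemma sph_ext_eqI: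
  assumes "sph_conv (\<lambda>w. Some (g w)) q (pfilter p)"
  shows "sph_ext g p = q"
proof -
  have "pfilter p \<noteq> bot"
    by (cases p) (auto simp: pfilter_def trivial_limit_at_infinity)
  then show ?thesis
    unfolding sph_ext_def using assms sph_conv_unique by blast
qed

lemma sph_ext_Some_eq_Some: "(g \<longlongrightarrow> d) (at c) \<Longrightarrow> sph_ext g (Some c) = Some d"
  by (rule sph_ext_eqI) (simp add: pfilter_def sph_conv_Some_iff)

lemma sph_ext_Some_isCont: "isCont g c \<Longrightarrow> sph_ext g (Some c) = Some (g c)"
  by (rule sph_ext_Some_eq_Some) (simp add: isCont_def)

lemma sph_ext_Some_eq_None: "filterlim g at_infinity (at c) \<Longrightarrow> sph_ext g (Some c) = None"
  by (rule sph_ext_eqI) (simp add: pfilter_def sph_conv_None_iff)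

lemma sph_ext_None_eq_Some:
  "((\<lambda>u. g (inverse u)) \<longlongrightarrow> d) (at 0) \<Longrightarrow> sph_ext g None = Some d"
  by (rule sph_ext_eqI)
    (simp add: pfilter_def sph_conv_Some_iff at_to_infinity filterlim_filtermap o_def)

lemma sph_ext_None_eq_None:
  "filterlim (\<lambda>u. g (inverse u)) at_infinity (at 0) \<Longrightarrow> sph_ext g None = None"
  by (rule sph_ext_eqI)
    (simp add: pfilter_def sph_conv_None_iff at_to_infinity filterlim_filtermap o_def)

lemma sph_deriv_Some_iff_local:
  assumes "eventually (\<lambda>u. chart (H (Some c)) (H (Some u)) = \<phi> u) (nhds c)"
  shows "sph_deriv H (Some c) D \<longleftrightarrow> (\<phi> has_field_derivative D) (at c)"
proof -
  have "sph_deriv H (Some c) D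
      \<longleftrightarrow> ((\<lambda>u. chart (H (Some c)) (H (Some u))) has_field_derivative D) (at c)"
    by (simp add: sph_deriv_def chart_inv_def coord_def)
  also have "\<dots> \<longleftrightarrow> (\<phi> has_field_derivative D) (at c)"
    by (rule DERIV_cong_ev[OF refl assms refl])
  finally show ?thesis .
qed

lemma sph_deriv_None_iff_local:
  assumes "eventually (\<lambda>u. chart (H None) (H (if u = 0 then None else Some (inverse u))) = \<phi> u)
    (nhds 0)"
  shows "sph_deriv H None D \<longleftrightarrow> (\<phi> has_field_derivative D) (at 0)"
proof -
  have "sph_deriv H None D
      \<longleftrightarrow> ((\<lambda>u. chart (H None) (H (if u = 0 then None else Some (inverse u))))
            has_field_derivative D) (at 0)"
    by (simp add: sph_deriv_def chart_inv_def coord_def)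
  also have "\<dots> \<longleftrightarrow> (\<phi> has_field_derivative D) (at 0)"
    by (rule DERIV_cong_ev[OF refl assms refl])
  finally show ?thesis .
qed

lemma sph_closure_finite_subset:
  assumes "finite S"
  shows "sph_closure S \<subseteq> S"
proof
  fix q assume "q \<in> sph_closure S"
  then obtain s where s: "\<And>n. s n \<in> S" and conv: "sph_conv s q sequentially"
    unfolding sph_closure_def by blast
  have fin: "finite (Some -` S)"
    using assms by (simp add: finite_vimageI)
  show "q \<in> S"
  proof (cases q)
    case None
    obtain B where B: "\<And>z. Some z \<in> S \<Longrightarrow> norm z \<le> B"
      using finite_imp_bounded[OF fin] by (auto simp: bounded_iff)
    have "eventually (\<lambda>n. case s n of None \<Rightarrow> True | Some z \<Rightarrow> B < norm z) sequentially"
      using conv None by (simp add: sph_conv_def)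
    then obtain n where "case s n of None \<Rightarrow> True | Some z \<Rightarrow> B < norm z"
      using eventually_happens'[OF sequentially_bot] by blast
    then have "s n = None"
      using B s[of n] by (cases "s n") force+
    then show ?thesis
      using s[of n] None by simp
  next
    case (Some d)
    have "eventually (\<lambda>n. the (s n) \<in> Some -` S) sequentially"
      using sph_conv_SomeD(1)[OF conv[unfolded Some]] by eventually_elim (use s in auto)
    then have "d \<in> Some -` S"
      by (rule Lim_in_closed_set[OF finite_imp_closed[OF fin] _ sequentially_bot
            sph_conv_SomeD(2)[OF conv[unfolded Some]]])
    then show ?thesis
      using Some by simp
  qed
qed

lemma exp1_eq_iff: "exp1 x = exp1 z \<longleftrightarrow> (\<exists>n::int. x = z + of_int n)"
proof -
  have "2 * of_real pi * \<i> * x = 2 * of_real pi * \<i> * z + of_real (of_int (2 * n) * pi) * \<i>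
      \<longleftrightarrow> x = z + of_int n" for n :: int
  proof -
    have "2 * of_real pi * \<i> * x = 2 * of_real pi * \<i> * z + of_real (of_int (2 * n) * pi) * \<i>
        \<longleftrightarrow> 2 * of_real pi * \<i> * x = 2 * of_real pi * \<i> * (z + of_int n)"
      by (simp add: algebra_simps)
    then show ?thesis by simp
  qed
  then show ?thesis
    unfolding exp1_def exp_eq by simp
qed

lemma filterlim_exp1_at: "filterlim exp1 (at (exp1 z)) (at z)"
proof -
  have "eventually (\<lambda>x. x \<in> ball z 1 - {z}) (at z)"
    by (rule eventually_at_in_open) auto
  then have "eventually (\<lambda>x. exp1 x \<noteq> exp1 z) (at z)"
  proof eventually_elim
    case (elim x)
    then have "x \<noteq> z + of_int n" for n :: int
      by (cases "n = 0") (auto simp: dist_norm)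
    then show ?case
      by (auto simp: exp1_eq_iff)
  qed
  moreover have "(exp1 \<longlongrightarrow> exp1 z) (at z)"
    unfolding exp1_def by (intro tendsto_intros)
  ultimately show ?thesis
    by (simp add: filterlim_at)
qed

lemma tendsto_segment_at_left_1:
  fixes w0 d :: complex
  shows "((\<lambda>t::real. w0 + of_real (1 - t) * d) \<longlongrightarrow> w0) (at_left 1)"
proof -
  have "((\<lambda>t::real. w0 + of_real (1 - t) * d) \<longlongrightarrow> w0 + of_real (1 - 1) * d) (at_left 1)"
    by (intro tendsto_intros)
  then show ?thesis
    by simp
qed

lemma filterlim_at_left_1_atI:
  assumes "(\<gamma> \<longlongrightarrow> w) (at_left 1)" "\<And>t. t \<in> {0..<1} \<Longrightarrow> \<gamma> t \<noteq> w"
  shows "filterlim \<gamma> (at w) (at_left (1::real))"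
  unfolding filterlim_at
proof
  show "eventually (\<lambda>t. \<gamma> t \<in> UNIV \<and> \<gamma> t \<noteq> w) (at_left 1)"
    by (rule eventually_at_left_1) (simp add: assms(2))
qed (rule assms(1))

lemma filterlim_inverse_power_at_left_1:
  assumes "m > 0"
  shows "filterlim (\<lambda>t::real. inverse ((1 - t) ^ m)) at_top (at_left 1)"
proof -
  have "filterlim (\<lambda>t::real. (1 - t) ^ m) (at_right 0) (at_left 1)"
    unfolding filterlim_at
  proof
    show "eventually (\<lambda>t::real. (1 - t) ^ m \<in> {0<..} \<and> (1 - t) ^ m \<noteq> 0) (at_left 1)"
      by (rule eventually_at_left_1) simp
    have "((\<lambda>t::real. (1 - t) ^ m) \<longlongrightarrow> (1 - 1) ^ m) (at_left 1)"
      by (intro tendsto_intros)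
    then show "((\<lambda>t::real. (1 - t) ^ m) \<longlongrightarrow> 0) (at_left 1)"
      using assms by (simp only: diff_self zero_power)
  qed
  then show ?thesis
    by (rule filterlim_compose[OF filterlim_inverse_at_top_right])
qed

lemma filterlim_Re_at_top_at_left_1:
  fixes F :: "real \<Rightarrow> complex"
  assumes "m > 0" and lim: "((\<lambda>t. of_real ((1 - t) ^ m) * F t) \<longlongrightarrow> L) (at_left 1)"
    and "Re L > 0"
  shows "filterlim (\<lambda>t. Re (F t)) at_top (at_left 1)"
proof -
  have ev: "eventually (\<lambda>t. Re (of_real ((1 - t) ^ m) * F t) * inverse ((1 - t) ^ m) = Re (F t))
      (at_left 1)"
    by (rule eventually_at_left_1) simp
  have "filterlim (\<lambda>t. Re (of_real ((1 - t) ^ m) * F t) * inverse ((1 - t) ^ m)) at_top (at_left 1)"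
    by (rule filterlim_tendsto_pos_mult_at_top[OF tendsto_Re[OF lim] \<open>Re L > 0\<close>
          filterlim_inverse_power_at_left_1[OF \<open>m > 0\<close>]])
  then show ?thesis
    by (simp only: filterlim_cong[OF refl refl ev])
qed

lemma filterlim_powi_mult_at_infinity:
  fixes E :: "complex \<Rightarrow> complex"
  assumes "isCont E 0" "E 0 \<noteq> 0" "n < 0"
  shows "filterlim (\<lambda>u. u powi n * E u) at_infinity (at 0)"
proof -
  have "isolated_zero (\<lambda>u::complex. u) 0"
    by (auto simp: isolated_zero_def eventually_at_filter)
  then have "is_pole (\<lambda>u::complex. u powi n) 0"
    using is_pole_power_int_0[of "\<lambda>u. u" 0 n] assms(3) by (auto intro: analytic_intros)
  then have "filterlim (\<lambda>u. E u * u powi n) at_infinity (at 0)"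
    using tendsto_mult_filterlim_at_infinity[of E "E 0"] assms(1,2)
    by (simp add: is_pole_def isCont_def)
  then show ?thesis
    by (simp add: mult.commute)
qed

lemma DERIV_power_int_mult_exp_at_0:
  fixes F :: "complex \<Rightarrow> complex"
  assumes "F field_differentiable (at 0)" "k \<ge> 1"
  shows "((\<lambda>u. u powi k * exp (s * F u)) has_field_derivative
           (if k = 1 then exp (s * F 0) else 0)) (at 0)"
proof -
  obtain DF where DF: "(F has_field_derivative DF) (at 0)"
    using assms(1) field_differentiable_def by blast
  have "((\<lambda>u. u powi k) has_field_derivative of_int k * 0 powi (k - 1) * 1) (at 0)"
    by (rule DERIV_power_int[OF DERIV_ident]) (use assms(2) in simp)
  from DERIV_mult[OF this DERIV_chain2[OF DERIV_exp DERIV_cmult[OF DF]]]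
  have "((\<lambda>u. u powi k * exp (s * F u)) has_field_derivative
      of_int k * 0 powi (k - 1) * 1 * exp (s * F 0) + exp (s * F 0) * (s * DF) * 0 powi k) (at 0)" .
  moreover have "of_int k * 0 powi (k - 1) * 1 * exp (s * F 0) + exp (s * F 0) * (s * DF) * 0 powi k
      = (if k = 1 then exp (s * F 0) else 0)"
    using assms(2) by (auto simp: power_int_0_left_if)
  ultimately show ?thesis
    by (simp only:)
qed

lemma DERIV_exp_cmult_eq_0_iff:
  assumes "F field_differentiable (at x)" "s \<noteq> 0"
  shows "((\<lambda>u. exp (s * F u)) has_field_derivative 0) (at x) \<longleftrightarrow> (F has_field_derivative 0) (at x)"
proof -
  obtain DF where DF: "(F has_field_derivative DF) (at x)"
    using assms(1) field_differentiable_def by blast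
  have E: "((\<lambda>u. exp (s * F u)) has_field_derivative exp (s * F x) * (s * DF)) (at x)"
    by (rule DERIV_chain2[OF DERIV_exp DERIV_cmult[OF DF]])
  have "((\<lambda>u. exp (s * F u)) has_field_derivative 0) (at x) \<longleftrightarrow> DF = 0"
  proof
    assume "((\<lambda>u. exp (s * F u)) has_field_derivative 0) (at x)"
    then have "exp (s * F x) * (s * DF) = 0"
      by (rule DERIV_unique[OF E])
    then show "DF = 0"
      using assms(2) by simp
  next
    assume "DF = 0"
    then show "((\<lambda>u. exp (s * F u)) has_field_derivative 0) (at x)"
      using E by simp
  qed
  also have "\<dots> \<longleftrightarrow> (F has_field_derivative 0) (at x)"
  proof
    assume "(F has_field_derivative 0) (at x)"
    then show "DF = 0"
      by (rule DERIV_unique[OF DF])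
  qed (use DF in simp)
  finally show ?thesis .
qed

lemma constant_on_if_exp_constant:
  fixes w :: "'a::topological_space \<Rightarrow> complex"
  assumes "connected S" "continuous_on S w" "\<And>t. t \<in> S \<Longrightarrow> exp (w t) = d"
  shows "w constant_on S"
proof (rule continuous_discrete_range_constant[OF assms(1,2)])
  fix x assume "x \<in> S"
  show "\<exists>e>0. \<forall>y. y \<in> S \<and> w y \<noteq> w x \<longrightarrow> e \<le> norm (w y - w x)"
  proof (intro exI[of _ 1] conjI allI impI)
    fix y assume y: "y \<in> S \<and> w y \<noteq> w x"
    then obtain n :: int where n: "w y = w x + of_real (of_int (2 * n) * pi) * \<i>"
      using assms(3) \<open>x \<in> S\<close> exp_eq[of "w y" "w x"] by auto
    with y have "1 \<le> \<bar>real_of_int n\<bar>"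
      by (cases "n = 0") auto
    then have "2 * pi * 1 \<le> 2 * pi * \<bar>real_of_int n\<bar>"
      by (intro mult_left_mono) auto
    then have "1 \<le> 2 * pi * \<bar>real_of_int n\<bar>"
      using pi_gt3 by linarith
    then show "1 \<le> norm (w y - w x)"
      using n by (simp add: norm_mult mult_ac)
  qed simp
qed

lemma tendsto_at_left_of_exp_tendsto:
  fixes v :: "real \<Rightarrow> complex"
  assumes "a < b" and cont: "continuous_on {a<..<b} v"
    and lim: "((\<lambda>t. exp (v t)) \<longlongrightarrow> d) (at_left b)" and "d \<noteq> 0"
  shows "\<exists>c. (v \<longlongrightarrow> c) (at_left b)"
proof -
  define E where "E t = exp (v t) / d" for t
  have E_lim: "(E \<longlongrightarrow> 1) (at_left b)"
    using tendsto_divide[OF lim tendsto_const \<open>d \<noteq> 0\<close>] \<open>d \<noteq> 0\<close> unfolding E_def by simp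
  obtain a' where "a' < b" and near_1: "\<And>t. a' < t \<Longrightarrow> t < b \<Longrightarrow> dist (E t) 1 < 1"
    using tendstoD[OF E_lim zero_less_one] unfolding eventually_at_left_field by blast
  define S where "S = {max a a'<..<b}"
  have E_not_nonpos: "E t \<notin> \<real>\<^sub>\<le>\<^sub>0" if "t \<in> S" for t
  proof -
    have "\<bar>Re (E t) - 1\<bar> < 1"
      using abs_Re_le_cmod[of "E t - 1"] near_1[of t] that by (simp add: S_def dist_norm)
    then show ?thesis
      by (auto simp: complex_nonpos_Reals_iff)
  qed
  \<comment> \<open>On S, w is a continuous branch of log d.\<close>
  define w where "w t = v t - Ln (E t)" for t
  have "continuous_on S w"
    unfolding w_def E_def using E_not_nonpos \<open>d \<noteq> 0\<close>
    by (intro continuous_intros continuous_on_subset[OF cont]) (auto simp: S_def E_def)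
  moreover have "exp (w t) = d" if "t \<in> S" for t
    using \<open>d \<noteq> 0\<close> by (simp add: w_def exp_diff E_def)
  ultimately have "w constant_on S"
    by (intro constant_on_if_exp_constant) (auto simp: S_def)
  then obtain c where c: "\<And>t. t \<in> S \<Longrightarrow> w t = c"
    unfolding constant_on_def by blast
  have "eventually (\<lambda>t. t \<in> S) (at_left b)"
    unfolding S_def eventually_at_left_field using \<open>a' < b\<close> \<open>a < b\<close>
    by (intro exI[of _ "max a a'"]) auto
  then have "eventually (\<lambda>t. c + Ln (E t) = v t) (at_left b)"
  proof eventually_elim
    case (elim t)
    show ?case
      using c[OF elim] by (simp add: w_def algebra_simps)
  qed
  moreover have "((\<lambda>t. c + Ln (E t)) \<longlongrightarrow> c + Ln 1) (at_left b)"
    by (intro tendsto_intros E_lim) simp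
  ultimately show ?thesis
    using Lim_transform_eventually by blast
qed

lemma linear_power_dvd_mult_cancel:
  fixes A B :: "'a::idom poly"
  assumes "[:-a, 1:] ^ n dvd A * B" "poly A a \<noteq> 0"
  shows "[:-a, 1:] ^ n dvd B"
proof (cases "B = 0")
  case False
  with assms(2) have AB: "A * B \<noteq> 0"
    by auto
  then have "n \<le> order a (A * B)"
    using assms(1) order_divides by blast
  also have "\<dots> = order a B"
    using order_mult[OF AB] order_0I[OF assms(2)] by simp
  finally show ?thesis
    using order_divides by blast
qed simp

lemma order_power_not_dvd_pderiv:
  fixes p :: "complex poly"
  assumes "p \<noteq> 0" "poly p a = 0"
  shows "\<not> [:-a, 1:] ^ order a p dvd pderiv p"
proof
  assume dvd: "[:-a, 1:] ^ order a p dvd pderiv p"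
  have "pderiv p \<noteq> 0"
  proof
    assume "pderiv p = 0"
    then have "degree p = 0"
      by (simp add: pderiv_eq_0_iff)
    then obtain c where "p = [:c:]"
      by (rule degree_eq_zeroE)
    with assms show False
      by auto
  qed
  with dvd have "order a p \<le> order a (pderiv p)"
    using order_divides by blast
  then show False
    using order_pderiv[OF assms] by simp
qed

definition two_pi_i :: complex where
  "two_pi_i = 2 * of_real pi * \<i>"

lemma two_pi_i_nonzero: "two_pi_i \<noteq> 0"
  by (simp add: two_pi_i_def)

lemma exp1_eq_exp_two_pi_i: "exp1 z = exp (two_pi_i * z)"
  by (simp add: exp1_def two_pi_i_def)

locale exp_projection =
  fixes P Q :: "complex poly" and l :: int
  assumes Q_nonzero: "Q \<noteq> 0" and coprime_P_Q: "coprime P Q" and Q_0: "poly Q 0 \<noteq> 0"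
    and degree_P_le: "degree P \<le> degree Q" and Q_has_root: "\<exists>w. poly Q w = 0"
begin

abbreviation "R \<equiv> ratf P Q"
abbreviation "g \<equiv> gproj l P Q"
abbreviation "H \<equiv> sph_ext g"

definition "poles = {w. poly Q w = 0}"
definition "regular = {w. w \<noteq> 0 \<and> poly Q w \<noteq> 0}"
definition "R_inf u =
  poly (monom 1 (degree Q - degree P) * reflect_poly P) u / poly (reflect_poly Q) u"

lemma g_eq: "g w = w powi l * exp (two_pi_i * R w)"
  by (simp add: gproj_def two_pi_i_def)

lemma finite_poles: "finite poles"
  unfolding poles_def using poly_roots_finite[OF Q_nonzero] .

lemma zero_notin_poles: "0 \<notin> poles"
  using Q_0 by (simp add: poles_def)

lemma regular_eq: "regular = - insert 0 poles"
  by (auto simp: regular_def poles_def)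

lemma open_regular: "open regular"
  by (simp add: regular_eq finite_imp_closed finite_poles open_Compl)

lemma eventually_regular_at: "eventually (\<lambda>w. w \<in> regular) (at w0)"
  using islimpt_finite[of "insert 0 poles" w0] finite_poles
  by (simp add: regular_eq islimpt_iff_eventually)

lemma eventually_regular_at_infinity: "eventually (\<lambda>w. w \<in> regular) at_infinity"
proof -
  obtain B where B: "\<forall>w\<in>insert 0 poles. norm w \<le> B"
    using finite_poles bounded_iff finite_imp_bounded by (metis finite_insert)
  show ?thesis
    unfolding eventually_at_infinity regular_eq
    by (intro exI[of _ "B + 1"]) (use B in force)
qed

lemma P_nonzero_at_pole:
  assumes "w \<in> poles"
  shows "poly P w \<noteq> 0"
proof
  assume "poly P w = 0"
  then have "[:-w, 1:] dvd P" "[:-w, 1:] dvd Q"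
    using assms by (auto simp: poles_def poly_eq_0_iff_dvd)
  then have "is_unit [:-w, 1:]"
    using coprime_P_Q coprime_common_divisor by blast
  then show False by (simp add: is_unit_poly_iff)
qed

lemma R_holomorphic: "R holomorphic_on - poles"
  unfolding ratf_def[abs_def] poles_def by (intro holomorphic_intros) auto

lemma R_field_differentiable: "w \<notin> poles \<Longrightarrow> R field_differentiable (at w)"
  using holomorphic_on_imp_differentiable_at[OF R_holomorphic] finite_poles
  by (simp add: finite_imp_closed open_Compl)

lemma R_field_differentiable_0: "R field_differentiable (at 0)"
  using R_field_differentiable zero_notin_poles by blast

lemma R_isCont: "w \<notin> poles \<Longrightarrow> isCont R w"
  by (rule field_differentiable_imp_continuous_at[OF R_field_differentiable])

lemma g_holomorphic: "g holomorphic_on regular"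
  unfolding g_eq[abs_def] ratf_def[abs_def] regular_def by (intro holomorphic_intros) auto

lemma g_isCont:
  assumes "w \<noteq> 0 \<or> 0 \<le> l" "w \<notin> poles"
  shows "isCont g w"
proof -
  have "isCont (\<lambda>w. w powi l) w"
    unfolding isCont_def using assms(1) by (intro tendsto_power_int' tendsto_ident_at) auto
  moreover have "isCont (\<lambda>w. exp (two_pi_i * R w)) w"
    using R_isCont[OF assms(2)] by (intro continuous_intros)
  ultimately show ?thesis
    unfolding g_eq[abs_def] by (rule continuous_mult)
qed

lemma H_regular: "w \<in> regular \<Longrightarrow> H (Some w) = Some (g w)"
  by (rule sph_ext_Some_isCont, rule g_isCont) (auto simp: regular_def poles_def)

lemma R_inf_eq:
  assumes "u \<noteq> 0"
  shows "R_inf u = R (inverse u)"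
proof -
  have "R_inf u = (u ^ (degree Q - degree P) * (u ^ degree P * poly P (inverse u)))
                  / (u ^ degree Q * poly Q (inverse u))"
    unfolding R_inf_def using assms by (simp add: poly_monom poly_reflect_poly_nz)
  also have "\<dots> = (u ^ degree Q * poly P (inverse u)) / (u ^ degree Q * poly Q (inverse u))"
    using degree_P_le by (simp add: mult.assoc[symmetric] power_add[symmetric])
  also have "\<dots> = R (inverse u)"
    using assms by (simp add: ratf_def)
  finally show ?thesis .
qed

lemma R_inf_field_differentiable: "R_inf field_differentiable (at 0)"
proof -
  have "poly (reflect_poly Q) 0 \<noteq> 0"
    using Q_nonzero by (simp add: poly_0_coeff_0 coeff_0_reflect_poly)
  then show ?thesis
    unfolding R_inf_def[abs_def] field_differentiable_def
    using DERIV_divide[OF poly_DERIV poly_DERIV] by blast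
qed

lemma R_inf_isCont: "isCont R_inf 0"
  by (rule field_differentiable_imp_continuous_at[OF R_inf_field_differentiable])

lemma R_inverse_tendsto: "((\<lambda>u. R (inverse u)) \<longlongrightarrow> R_inf 0) (at 0)"
proof (rule Lim_transform_eventually)
  show "(R_inf \<longlongrightarrow> R_inf 0) (at 0)"
    using R_inf_isCont by (simp add: isCont_def)
  show "eventually (\<lambda>u. R_inf u = R (inverse u)) (at 0)"
    by (auto simp: eventually_at_filter R_inf_eq)
qed

lemma Lim_at_infinity_R: "Lim at_infinity R = R_inf 0"
  using R_inverse_tendsto
  by (intro tendsto_Lim)
    (simp_all add: trivial_limit_at_infinity at_to_infinity filterlim_filtermap o_def)

lemma R_pole:
  assumes "w0 \<in> poles"
  shows "filterlim R at_infinity (at w0)"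
proof -
  have "filterlim (poly Q) (at 0) (at w0)"
    unfolding filterlim_at
  proof
    show "eventually (\<lambda>w. poly Q w \<in> UNIV \<and> poly Q w \<noteq> 0) (at w0)"
      using eventually_regular_at by eventually_elim (simp add: regular_def)
    have "(poly Q \<longlongrightarrow> poly Q w0) (at w0)"
      by (intro tendsto_intros)
    then show "(poly Q \<longlongrightarrow> 0) (at w0)"
      using assms by (simp add: poles_def)
  qed
  moreover have "(poly P \<longlongrightarrow> poly P w0) (at w0)"
    by (intro tendsto_intros)
  ultimately show ?thesis
    unfolding ratf_def[abs_def]
    using filterlim_divide_at_infinity P_nonzero_at_pole[OF assms] by blast
qed

lemma g_inverse_eq: "u \<noteq> 0 \<Longrightarrow> g (inverse u) = u powi (- l) * exp (two_pi_i * R_inf u)"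
  by (simp add: g_eq R_inf_eq power_int_inverse power_int_minus)

lemma g_pole_at_0: "l < 0 \<Longrightarrow> filterlim g at_infinity (at 0)"
  unfolding g_eq[abs_def] using R_isCont[OF zero_notin_poles]
  by (intro filterlim_powi_mult_at_infinity continuous_intros) auto

lemma g_inverse_pole_at_0: "l > 0 \<Longrightarrow> filterlim (\<lambda>u. g (inverse u)) at_infinity (at 0)"
proof -
  assume "l > 0"
  have "filterlim (\<lambda>u. u powi (- l) * exp (two_pi_i * R_inf u)) at_infinity (at 0)"
    using R_inf_isCont \<open>l > 0\<close> by (intro filterlim_powi_mult_at_infinity continuous_intros) auto
  moreover have "eventually (\<lambda>u. u powi (- l) * exp (two_pi_i * R_inf u) = g (inverse u)) (at 0)"
    by (auto simp: eventually_at_filter g_inverse_eq)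
  ultimately show ?thesis
    by (simp add: filterlim_cong)
qed

lemma g_inverse_tendsto:
  "l \<le> 0 \<Longrightarrow> ((\<lambda>u. g (inverse u)) \<longlongrightarrow> 0 powi (- l) * exp (two_pi_i * R_inf 0)) (at 0)"
proof (rule Lim_transform_eventually)
  assume "l \<le> 0"
  show "((\<lambda>u. u powi (- l) * exp (two_pi_i * R_inf u))
      \<longlongrightarrow> 0 powi (- l) * exp (two_pi_i * R_inf 0)) (at 0)"
    using R_inf_isCont \<open>l \<le> 0\<close> unfolding isCont_def by (intro tendsto_intros) auto
  show "eventually (\<lambda>u. u powi (- l) * exp (two_pi_i * R_inf u) = g (inverse u)) (at 0)"
    by (auto simp: eventually_at_filter g_inverse_eq)
qed

lemma H_0_nonneg: "l \<ge> 0 \<Longrightarrow> H (Some 0) = Some (g 0)"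
  using g_isCont zero_notin_poles by (simp add: sph_ext_Some_isCont)

lemma H_0_neg: "l < 0 \<Longrightarrow> H (Some 0) = None"
  by (rule sph_ext_Some_eq_None[OF g_pole_at_0])

lemma H_inf_pos: "l > 0 \<Longrightarrow> H None = None"
  by (rule sph_ext_None_eq_None[OF g_inverse_pole_at_0])

lemma H_inf_nonpos: "l \<le> 0 \<Longrightarrow> H None = Some (0 powi (- l) * exp (two_pi_i * R_inf 0))"
  by (rule sph_ext_None_eq_Some[OF g_inverse_tendsto])


section \<open>Essential singularities\<close>

definition path_to_pole :: "complex \<Rightarrow> (real \<Rightarrow> complex) \<Rightarrow> bool" where
  "path_to_pole w0 \<gamma> \<longleftrightarrow>
    continuous_on {0..<1} \<gamma> \<and> (\<forall>t\<in>{0..<1}. \<gamma> t \<in> regular) \<and> (\<gamma> \<longlongrightarrow> w0) (at_left 1)"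

lemma filterlim_at_pole_if_path_to_pole:
  assumes "w0 \<in> poles" "path_to_pole w0 \<gamma>"
  shows "filterlim \<gamma> (at w0) (at_left 1)"
  using assms by (intro filterlim_at_left_1_atI) (auto simp: path_to_pole_def regular_def poles_def)

lemma pole_order_decomp:
  assumes "w0 \<in> poles"
  obtains m Q1 where "m > 0" "Q = [:-w0, 1:] ^ m * Q1" "poly Q1 w0 \<noteq> 0"
proof -
  have "order w0 Q > 0"
    using assms Q_nonzero order_root[of Q w0] by (simp add: poles_def)
  moreover obtain Q1 where "Q = [:-w0, 1:] ^ order w0 Q * Q1" "\<not> [:-w0, 1:] dvd Q1"
    using order_decomp[OF Q_nonzero, of w0] by blast
  ultimately show ?thesis
    using that[of "order w0 Q" Q1] by (simp add: poly_eq_0_iff_dvd)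
qed

lemma radial_limit_at_pole:
  assumes "Q = [:-w0, 1:] ^ m * Q1" "poly Q1 w0 \<noteq> 0" "d \<noteq> 0"
  shows "((\<lambda>t. of_real ((1 - t) ^ m) * R (w0 + of_real (1 - t) * d))
           \<longlongrightarrow> poly P w0 / (d ^ m * poly Q1 w0)) (at_left 1)"
proof -
  define s where "s t = w0 + of_real (1 - t) * d" for t :: real
  have "eventually (\<lambda>t. poly P (s t) / (d ^ m * poly Q1 (s t)) = of_real ((1 - t) ^ m) * R (s t))
      (at_left 1)"
  proof (rule eventually_at_left_1)
    fix t :: real assume "t < 1"
    have "poly Q (s t) = of_real ((1 - t) ^ m) * (d ^ m * poly Q1 (s t))"
      by (simp add: s_def assms(1) poly_power power_mult_distrib)
    then show "poly P (s t) / (d ^ m * poly Q1 (s t)) = of_real ((1 - t) ^ m) * R (s t)"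
      using \<open>t < 1\<close> by (simp add: ratf_def)
  qed
  moreover have "((\<lambda>t. poly P (s t) / (d ^ m * poly Q1 (s t))) \<longlongrightarrow> poly P w0 / (d ^ m * poly Q1 w0))
      (at_left 1)"
    unfolding s_def using assms(2,3) by (intro tendsto_intros tendsto_segment_at_left_1) simp
  ultimately show ?thesis
    unfolding s_def using Lim_transform_eventually by fastforce
qed

lemma nth_root_direction:
  fixes c y :: complex
  assumes "c \<noteq> 0" "y \<noteq> 0" "m > 0" "\<delta> > 0"
  obtains d r where "d \<noteq> 0" "norm d < \<delta>" "r > 0" "c / d ^ m = of_real r * y"
proof -
  obtain d0 where d0: "d0 ^ m = c / y"
    using nth_root_exists[OF \<open>m > 0\<close>, of "c / y"] by metis
  have "d0 \<noteq> 0"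
  proof
    assume "d0 = 0"
    then have "c / y = 0"
      using d0 \<open>m > 0\<close> by (simp add: power_0_left)
    then show False
      using assms(1,2) by simp
  qed
  define \<rho> where "\<rho> = \<delta> / (2 * norm d0)"
  have "\<rho> > 0"
    using assms(4) \<open>d0 \<noteq> 0\<close> by (simp add: \<rho>_def)
  have "norm (of_real \<rho> * d0) = \<rho> * norm d0"
    using \<open>\<rho> > 0\<close> by (simp add: norm_mult)
  also have "\<dots> < \<delta>"
    using assms(4) \<open>d0 \<noteq> 0\<close> by (simp add: \<rho>_def)
  finally have "norm (of_real \<rho> * d0) < \<delta>" .
  moreover have "c / (of_real \<rho> * d0) ^ m = of_real (inverse (\<rho> ^ m)) * y"
    using d0 \<open>d0 \<noteq> 0\<close> \<open>\<rho> > 0\<close> assms(1,2) by (simp add: power_mult_distrib field_simps)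
  ultimately show ?thesis
    using that[of "of_real \<rho> * d0" "inverse (\<rho> ^ m)"] \<open>\<rho> > 0\<close> \<open>d0 \<noteq> 0\<close> by simp
qed

lemma exists_radial_path_to_pole:
  assumes "w0 \<in> poles" "y \<noteq> 0"
  obtains \<gamma> m r where "path_to_pole w0 \<gamma>" "m > 0" "r > 0"
    "((\<lambda>t. of_real ((1 - t) ^ m) * R (\<gamma> t)) \<longlongrightarrow> of_real r * y) (at_left 1)"
proof -
  obtain \<delta> where "\<delta> > 0" and \<delta>: "\<And>w. w \<noteq> w0 \<Longrightarrow> dist w w0 < \<delta> \<Longrightarrow> w \<in> regular"
    using eventually_regular_at[of w0] unfolding eventually_at by auto
  obtain m Q1 where "m > 0" and Q1: "Q = [:-w0, 1:] ^ m * Q1" "poly Q1 w0 \<noteq> 0"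
    using pole_order_decomp[OF assms(1)] by blast
  have "poly P w0 / poly Q1 w0 \<noteq> 0"
    using P_nonzero_at_pole[OF assms(1)] Q1(2) by simp
  \<comment> \<open>Near w0, R w is about c / (w - w0)^m with c = P w0 / Q1 w0; the direction d of the path
    is chosen so that c / d^m is a positive multiple of y.\<close>
  then obtain d r where "d \<noteq> 0" "norm d < \<delta>" "r > 0"
    and dir: "poly P w0 / poly Q1 w0 / d ^ m = of_real r * y"
    using nth_root_direction[OF _ assms(2) \<open>m > 0\<close> \<open>\<delta> > 0\<close>] by blast
  define \<gamma> where "\<gamma> t = w0 + of_real (1 - t) * d" for t :: real
  have \<gamma>_regular: "\<gamma> t \<in> regular" if "t \<in> {0..<1}" for t
  proof (rule \<delta>)
    show "\<gamma> t \<noteq> w0"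
      using that \<open>d \<noteq> 0\<close> by (simp add: \<gamma>_def)
    have "dist (\<gamma> t) w0 = norm (of_real (1 - t) * d)"
      by (simp add: \<gamma>_def dist_norm)
    also have "\<dots> = (1 - t) * norm d"
      using that by (simp only: norm_mult norm_of_real) simp
    also have "\<dots> \<le> norm d"
      using that by (simp add: mult_left_le_one_le)
    finally show "dist (\<gamma> t) w0 < \<delta>"
      using \<open>norm d < \<delta>\<close> by simp
  qed
  have "continuous_on {0..<1} \<gamma>"
    unfolding \<gamma>_def by (intro continuous_intros)
  moreover have "(\<gamma> \<longlongrightarrow> w0) (at_left 1)"
    unfolding \<gamma>_def by (rule tendsto_segment_at_left_1)
  ultimately have path: "path_to_pole w0 \<gamma>"
    using \<gamma>_regular by (simp add: path_to_pole_def)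
  have lim: "((\<lambda>t. of_real ((1 - t) ^ m) * R (\<gamma> t)) \<longlongrightarrow> of_real r * y) (at_left 1)"
  proof -
    have "poly P w0 / (d ^ m * poly Q1 w0) = of_real r * y"
      using dir \<open>d \<noteq> 0\<close> Q1(2) by (simp add: field_simps)
    then show ?thesis
      using radial_limit_at_pole[OF Q1 \<open>d \<noteq> 0\<close>] unfolding \<gamma>_def by simp
  qed
  show ?thesis
    by (rule that[OF path \<open>m > 0\<close> \<open>r > 0\<close> lim])
qed

lemma exists_path_to_pole_Re_at_top:
  assumes "w0 \<in> poles" "Re (s * y) > 0"
  obtains \<gamma> where "path_to_pole w0 \<gamma>" "filterlim (\<lambda>t. Re (s * R (\<gamma> t))) at_top (at_left 1)"
proof -
  have "y \<noteq> 0"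
    using assms(2) by auto
  obtain \<gamma> m r where "path_to_pole w0 \<gamma>" "m > 0" "r > 0"
    and lim: "((\<lambda>t. of_real ((1 - t) ^ m) * R (\<gamma> t)) \<longlongrightarrow> of_real r * y) (at_left 1)"
    using exists_radial_path_to_pole[OF assms(1) \<open>y \<noteq> 0\<close>] by blast
  have "((\<lambda>t. of_real ((1 - t) ^ m) * (s * R (\<gamma> t))) \<longlongrightarrow> of_real r * (s * y)) (at_left 1)"
    using tendsto_mult[OF tendsto_const[of s] lim] by (simp add: mult_ac)
  moreover have "Re (of_real r * (s * y)) > 0"
    using \<open>r > 0\<close> assms(2) by simp
  ultimately have "filterlim (\<lambda>t. Re (s * R (\<gamma> t))) at_top (at_left 1)"
    by (rule filterlim_Re_at_top_at_left_1[OF \<open>m > 0\<close>])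
  with \<open>path_to_pole w0 \<gamma>\<close> show ?thesis
    by (rule that)
qed

lemma norm_g: "norm (g w) = norm w powi l * exp (Re (two_pi_i * R w))"
  by (simp add: g_eq norm_mult norm_power_int norm_exp_eq_Re)

lemma norm_powi_tendsto_along_path_to_pole:
  assumes "w0 \<in> poles" "path_to_pole w0 \<gamma>"
  shows "((\<lambda>t. norm (\<gamma> t) powi l) \<longlongrightarrow> norm w0 powi l) (at_left 1)" "norm w0 powi l > 0"
proof -
  have "w0 \<noteq> 0"
    using assms(1) zero_notin_poles by auto
  then show "((\<lambda>t. norm (\<gamma> t) powi l) \<longlongrightarrow> norm w0 powi l) (at_left 1)" "norm w0 powi l > 0"
    using assms(2) by (auto simp: path_to_pole_def intro!: tendsto_intros)
qed

lemma exists_path_to_pole_g_tendsto_0: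
  assumes "w0 \<in> poles"
  obtains \<gamma> where "path_to_pole w0 \<gamma>" "((\<lambda>t. g (\<gamma> t)) \<longlongrightarrow> 0) (at_left 1)"
proof -
  have Re_pos: "Re (- two_pi_i * \<i>) > 0"
    by (simp add: two_pi_i_def)
  obtain \<gamma> where path: "path_to_pole w0 \<gamma>"
    and Re_lim: "filterlim (\<lambda>t. Re (- two_pi_i * R (\<gamma> t))) at_top (at_left 1)"
    using exists_path_to_pole_Re_at_top[OF assms Re_pos] by blast
  from Re_lim have "filterlim (\<lambda>t. Re (two_pi_i * R (\<gamma> t))) at_bot (at_left 1)"
    by (simp add: filterlim_uminus_at_top)
  then have "((\<lambda>t. exp (Re (two_pi_i * R (\<gamma> t)))) \<longlongrightarrow> 0) (at_left 1)"
    by (rule filterlim_compose[OF exp_at_bot])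
  then have "((\<lambda>t. norm (g (\<gamma> t))) \<longlongrightarrow> norm w0 powi l * 0) (at_left 1)"
    unfolding norm_g by (intro tendsto_mult norm_powi_tendsto_along_path_to_pole[OF assms path])
  then show ?thesis
    using that path by (simp add: tendsto_norm_zero_iff)
qed

lemma exists_path_to_pole_g_at_infinity:
  assumes "w0 \<in> poles"
  obtains \<gamma> where "path_to_pole w0 \<gamma>" "filterlim (\<lambda>t. g (\<gamma> t)) at_infinity (at_left 1)"
proof -
  have Re_pos: "Re (two_pi_i * - \<i>) > 0"
    by (simp add: two_pi_i_def)
  obtain \<gamma> where path: "path_to_pole w0 \<gamma>"
    and Re_lim: "filterlim (\<lambda>t. Re (two_pi_i * R (\<gamma> t))) at_top (at_left 1)"
    using exists_path_to_pole_Re_at_top[OF assms Re_pos] by blast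
  from Re_lim have "filterlim (\<lambda>t. exp (Re (two_pi_i * R (\<gamma> t)))) at_top (at_left 1)"
    by (rule filterlim_compose[OF exp_at_top])
  then have "filterlim (\<lambda>t. norm (g (\<gamma> t))) at_top (at_left 1)"
    unfolding norm_g
    by (rule filterlim_tendsto_pos_mult_at_top[OF norm_powi_tendsto_along_path_to_pole[OF assms path]])
  then show ?thesis
    using that path by (simp add: filterlim_at_infinity_conv_norm_at_top)
qed

lemma isolated_singularity_at_pole:
  assumes "w0 \<in> poles"
  shows "isolated_singularity_at g w0"
proof (rule isolated_singularity_at_holomorphic)
  have "insert w0 regular = - (insert 0 poles - {w0})"
    using assms zero_notin_poles by (auto simp: regular_eq)
  then show "open (insert w0 regular)"
    using finite_poles by (metis finite_Diff finite_imp_closed finite_insert open_Compl)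
  show "g holomorphic_on insert w0 regular - {w0}"
    by (rule holomorphic_on_subset[OF g_holomorphic]) auto
qed simp

lemma essential_at_pole:
  assumes "w0 \<in> poles"
  shows "\<not> not_essential g w0"
proof
  assume "not_essential g w0"
  then consider c where "(g \<longlongrightarrow> c) (at w0)" | "is_pole g w0"
    unfolding not_essential_def by blast
  then show False
  proof cases
    case (1 c)
    obtain \<gamma> where "path_to_pole w0 \<gamma>"
      and to_infinity: "filterlim (\<lambda>t. g (\<gamma> t)) at_infinity (at_left 1)"
      using exists_path_to_pole_g_at_infinity[OF assms] by blast
    then have "((\<lambda>t. g (\<gamma> t)) \<longlongrightarrow> c) (at_left 1)"
      using filterlim_compose[OF 1 filterlim_at_pole_if_path_to_pole[OF assms]] by blast
    then show False
      using not_tendsto_and_filterlim_at_infinity[OF trivial_limit_at_left_real _ to_infinity] by blast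
  next
    case 2
    obtain \<gamma> where "path_to_pole w0 \<gamma>" and to_0: "((\<lambda>t. g (\<gamma> t)) \<longlongrightarrow> 0) (at_left 1)"
      using exists_path_to_pole_g_tendsto_0[OF assms] by blast
    then have "filterlim (\<lambda>t. g (\<gamma> t)) at_infinity (at_left 1)"
      using filterlim_compose[OF 2[unfolded is_pole_def] filterlim_at_pole_if_path_to_pole[OF assms]]
      by blast
    then show False
      using not_tendsto_and_filterlim_at_infinity[OF trivial_limit_at_left_real to_0] by blast
  qed
qed

lemma not_ess_sing_off_poles:
  assumes "p \<notin> Some ` poles"
  shows "\<not> ess_sing_at g p"
proof (cases p)
  case None
  have "not_essential (\<lambda>u. g (inverse u)) 0"
    using g_inverse_pole_at_0 g_inverse_tendsto unfolding not_essential_def is_pole_def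
    by (cases "l > 0") force+
  then show ?thesis
    using None by (simp add: ess_sing_at_def)
next
  case (Some w)
  with assms have "w \<notin> poles"
    by auto
  then have "not_essential g w"
    using g_isCont g_pole_at_0 unfolding not_essential_def is_pole_def isCont_def
    by (cases "w \<noteq> 0 \<or> 0 \<le> l") auto
  then show ?thesis
    using Some by (simp add: ess_sing_at_def)
qed

lemma ess_sings_eq: "ess_sings g = Some ` poles"
proof
  show "ess_sings g \<subseteq> Some ` poles"
    using not_ess_sing_off_poles unfolding ess_sings_def by blast
  show "Some ` poles \<subseteq> ess_sings g"
    using isolated_singularity_at_pole essential_at_pole
    by (auto simp: ess_sings_def ess_sing_at_def)
qed

lemma fR_poles: "{z. sph_ext (fR l P Q) (Some z) = None} = exp1 -` poles"
proof (intro set_eqI iffI)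
  fix z assume "z \<in> exp1 -` poles"
  then have "filterlim (\<lambda>x. R (exp1 x)) at_infinity (at z)"
    by (intro filterlim_compose[OF R_pole filterlim_exp1_at]) simp
  then have "filterlim (fR l P Q) at_infinity (at z)"
    unfolding fR_def[abs_def]
    by (intro tendsto_add_filterlim_at_infinity[OF tendsto_mult[OF tendsto_const tendsto_ident_at]])
  then show "z \<in> {z. sph_ext (fR l P Q) (Some z) = None}"
    by (simp add: sph_ext_Some_eq_None)
next
  fix z assume z: "z \<in> {z. sph_ext (fR l P Q) (Some z) = None}"
  show "z \<in> exp1 -` poles"
  proof (rule ccontr)
    assume "z \<notin> exp1 -` poles"
    then have "isCont (\<lambda>x. R (exp1 x)) z"
      by (intro isCont_o2[OF _ R_isCont]) (auto simp: exp1_def intro!: continuous_intros)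
    then have "isCont (fR l P Q) z"
      unfolding fR_def[abs_def] by (intro continuous_intros)
    then show False
      using z by (simp add: sph_ext_Some_isCont)
  qed
qed

lemma exp1_image_vimage_poles: "exp1 ` exp1 -` poles = poles"
proof -
  have "w \<in> range exp1" if "w \<in> poles" for w
  proof -
    have "w \<noteq> 0"
      using that zero_notin_poles by auto
    then have "exp1 (Ln w / two_pi_i) = w"
      using two_pi_i_nonzero by (simp add: exp1_eq_exp_two_pi_i)
    then show ?thesis
      by (metis rangeI)
  qed
  then show ?thesis
    by (auto simp: image_vimage_eq)
qed

section \<open>Asymptotic values\<close>

lemma no_finite_nonzero_limit_at_pole:
  fixes \<gamma> :: "real \<Rightarrow> complex"
  assumes "w0 \<in> poles" "b < 1" "continuous_on {b<..<1} \<gamma>"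
    and \<gamma>_regular: "\<And>t. t \<in> {b<..<1} \<Longrightarrow> \<gamma> t \<in> regular"
    and \<gamma>_at: "filterlim \<gamma> (at w0) (at_left 1)"
    and g_lim: "((\<lambda>t. g (\<gamma> t)) \<longlongrightarrow> d) (at_left 1)"
  shows "d = 0"
proof (rule ccontr)
  assume "d \<noteq> 0"
  have ev_final: "eventually (\<lambda>t. t \<in> {b<..<1}) (at_left 1)"
    unfolding eventually_at_left_field using \<open>b < 1\<close> by auto
  have "w0 \<noteq> 0"
    using \<open>w0 \<in> poles\<close> zero_notin_poles by auto
  have "(\<gamma> \<longlongrightarrow> w0) (at_left 1)"
    using \<gamma>_at by (simp add: filterlim_at)
  then have "((\<lambda>t. g (\<gamma> t) / \<gamma> t powi l) \<longlongrightarrow> d / w0 powi l) (at_left 1)"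
    using g_lim \<open>w0 \<noteq> 0\<close> by (auto intro!: tendsto_intros)
  moreover have "eventually (\<lambda>t. g (\<gamma> t) / \<gamma> t powi l = exp (two_pi_i * R (\<gamma> t))) (at_left 1)"
    using ev_final by eventually_elim (use \<gamma>_regular in \<open>auto simp: g_eq regular_def\<close>)
  ultimately have exp_lim: "((\<lambda>t. exp (two_pi_i * R (\<gamma> t))) \<longlongrightarrow> d / w0 powi l) (at_left 1)"
    by (rule Lim_transform_eventually)
  have "continuous_on {b<..<1} (\<lambda>t. R (\<gamma> t))"
  proof (rule continuous_on_compose2[OF holomorphic_on_imp_continuous_on[OF R_holomorphic]])
    show "continuous_on {b<..<1} \<gamma>"
      by fact
    show "\<gamma> ` {b<..<1} \<subseteq> - poles"
      using \<gamma>_regular by (auto simp: regular_def poles_def)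
  qed
  then have "continuous_on {b<..<1} (\<lambda>t. two_pi_i * R (\<gamma> t))"
    by (intro continuous_intros)
  moreover have "d / w0 powi l \<noteq> 0"
    using \<open>d \<noteq> 0\<close> \<open>w0 \<noteq> 0\<close> by auto
  ultimately obtain c where "((\<lambda>t. two_pi_i * R (\<gamma> t)) \<longlongrightarrow> c) (at_left 1)"
    using tendsto_at_left_of_exp_tendsto[OF \<open>b < 1\<close> _ exp_lim] by blast
  moreover have "filterlim (\<lambda>t. two_pi_i * R (\<gamma> t)) at_infinity (at_left 1)"
    by (rule tendsto_mult_filterlim_at_infinity[OF tendsto_const two_pi_i_nonzero
          filterlim_compose[OF R_pole[OF \<open>w0 \<in> poles\<close>] \<gamma>_at]])
  ultimately show False
    using not_tendsto_and_filterlim_at_infinity[OF trivial_limit_at_left_real] by blast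
qed

lemma asym_vals_subset: "asym_vals g \<subseteq> {Some 0, None}"
proof
  fix a assume "a \<in> asym_vals g"
  then obtain \<gamma> :: "real \<Rightarrow> complex" and e where "e \<in> ess_sings g"
    and \<gamma>_cont: "continuous_on {0..<1} \<gamma>"
    and \<gamma>_avoids: "\<forall>t\<in>{0..<1}. Some (\<gamma> t) \<notin> ess_sings g"
    and "sph_conv (\<lambda>t. Some (\<gamma> t)) e (at_left 1)"
    and lim: "sph_conv (\<lambda>t. H (Some (\<gamma> t))) a (at_left 1)"
    unfolding asym_vals_def by blast
  then obtain w0 where "w0 \<in> poles" and "(\<gamma> \<longlongrightarrow> w0) (at_left 1)"
    by (auto simp: ess_sings_eq sph_conv_Some_iff)
  then have \<gamma>_at: "filterlim \<gamma> (at w0) (at_left 1)"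
    using \<gamma>_avoids by (intro filterlim_at_left_1_atI) (auto simp: ess_sings_eq)
  then have "eventually (\<lambda>t. \<gamma> t \<in> regular) (at_left 1)"
    by (rule eventually_compose_filterlim[OF eventually_regular_at])
  then obtain b where "b < 1" and b: "\<And>t. b < t \<Longrightarrow> t < 1 \<Longrightarrow> \<gamma> t \<in> regular"
    unfolding eventually_at_left_field by blast
  define b' where "b' = max b 0"
  have "b' < 1"
    using \<open>b < 1\<close> by (simp add: b'_def)
  have \<gamma>_regular: "\<gamma> t \<in> regular" if "t \<in> {b'<..<1}" for t
    using b that by (simp add: b'_def)
  show "a \<in> {Some 0, None}"
  proof (cases a)
    case (Some d)
    have "eventually (\<lambda>t. t \<in> {b'<..<1}) (at_left 1)"
      unfolding eventually_at_left_field using \<open>b' < 1\<close> by auto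
    then have "eventually (\<lambda>t. H (Some (\<gamma> t)) = Some (g (\<gamma> t))) (at_left 1)"
      by eventually_elim (simp add: H_regular \<gamma>_regular)
    from sph_conv_cong[OF this lim] have "((\<lambda>t. g (\<gamma> t)) \<longlongrightarrow> d) (at_left 1)"
      by (simp add: Some sph_conv_Some_iff)
    moreover have "continuous_on {b'<..<1} \<gamma>"
      by (rule continuous_on_subset[OF \<gamma>_cont]) (auto simp: b'_def)
    ultimately have "d = 0"
      using no_finite_nonzero_limit_at_pole[OF \<open>w0 \<in> poles\<close> \<open>b' < 1\<close> _ \<gamma>_regular \<gamma>_at] by blast
    then show ?thesis
      using Some by simp
  qed simp
qed

lemma asym_val_of_path_to_pole:
  assumes "w0 \<in> poles" "path_to_pole w0 \<gamma>" "sph_conv (\<lambda>t. Some (g (\<gamma> t))) a (at_left 1)"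
  shows "a \<in> asym_vals g"
  unfolding asym_vals_def
proof (intro CollectI exI[of _ \<gamma>] exI[of _ "Some w0"] conjI ballI)
  show "Some w0 \<in> ess_sings g"
    using assms(1) by (simp add: ess_sings_eq)
  show "continuous_on {0..<1} \<gamma>"
    using assms(2) by (simp add: path_to_pole_def)
  show "Some (\<gamma> t) \<notin> ess_sings g" if "t \<in> {0..<1}" for t
    using assms(2) that by (auto simp: path_to_pole_def ess_sings_eq regular_def poles_def)
  show "sph_conv (\<lambda>t. Some (\<gamma> t)) (Some w0) (at_left 1)"
    using assms(2) by (simp add: path_to_pole_def sph_conv_Some_iff)
  have "eventually (\<lambda>t. Some (g (\<gamma> t)) = H (Some (\<gamma> t))) (at_left 1)"
    using assms(2) by (intro eventually_at_left_1) (simp add: path_to_pole_def H_regular)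
  then show "sph_conv (\<lambda>t. H (Some (\<gamma> t))) a (at_left 1)"
    by (rule sph_conv_cong) (rule assms(3))
qed

lemma asym_vals_eq: "asym_vals g = {Some 0, None}"
proof
  show "asym_vals g \<subseteq> {Some 0, None}"
    by (rule asym_vals_subset)
  obtain w0 where w0: "w0 \<in> poles"
    using Q_has_root by (auto simp: poles_def)
  obtain \<gamma>0 where "path_to_pole w0 \<gamma>0" "((\<lambda>t. g (\<gamma>0 t)) \<longlongrightarrow> 0) (at_left 1)"
    using exists_path_to_pole_g_tendsto_0[OF w0] by blast
  then have "Some 0 \<in> asym_vals g"
    by (intro asym_val_of_path_to_pole[OF w0]) (simp_all add: sph_conv_Some_iff)
  moreover obtain \<gamma>1 where "path_to_pole w0 \<gamma>1" "filterlim (\<lambda>t. g (\<gamma>1 t)) at_infinity (at_left 1)"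
    using exists_path_to_pole_g_at_infinity[OF w0] by blast
  then have "None \<in> asym_vals g"
    by (intro asym_val_of_path_to_pole[OF w0]) (simp_all add: sph_conv_None_iff)
  ultimately show "{Some 0, None} \<subseteq> asym_vals g"
    by blast
qed

section \<open>Critical points and finite type\<close>

text \<open>Off 0 and the poles, g' = g (l / w + 2 pi i R'); multiplying the bracket by w Q^2 clears
  its denominators.\<close>
definition "crit_poly =
  smult (of_int l) (Q * Q) + smult two_pi_i ([:0, 1:] * (pderiv P * Q - P * pderiv Q))"

lemma crit_poly_nonzero: "crit_poly \<noteq> 0"
proof
  assume "crit_poly = 0"
  obtain w0 where "w0 \<in> poles"
    using Q_has_root by (auto simp: poles_def)
  define q where "q = [:-w0, 1:] ^ order w0 Q"
  have "q dvd Q"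
    unfolding q_def by (rule order_1)
  have "smult two_pi_i ([:0, 1:] * (pderiv P * Q - P * pderiv Q)) = - smult (of_int l) (Q * Q)"
    using \<open>crit_poly = 0\<close> unfolding crit_poly_def by (simp add: eq_neg_iff_add_eq_0 add.commute)
  moreover have "q dvd smult (of_int l) (Q * Q)"
    using \<open>q dvd Q\<close> by (simp add: dvd_smult)
  ultimately have "q dvd smult two_pi_i ([:0, 1:] * (pderiv P * Q - P * pderiv Q))"
    by simp
  then have "q dvd [:0, 1:] * (pderiv P * Q - P * pderiv Q)"
    using two_pi_i_nonzero by (rule dvd_smult_cancel)
  then have "q dvd pderiv P * Q - P * pderiv Q"
    unfolding q_def
    by (rule linear_power_dvd_mult_cancel) (use \<open>w0 \<in> poles\<close> zero_notin_poles in auto)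
  then have "q dvd pderiv P * Q - (pderiv P * Q - P * pderiv Q)"
    by (rule dvd_diff[OF dvd_mult[OF \<open>q dvd Q\<close>]])
  then have "q dvd P * pderiv Q"
    by simp
  then have "q dvd pderiv Q"
    unfolding q_def by (rule linear_power_dvd_mult_cancel) (rule P_nonzero_at_pole[OF \<open>w0 \<in> poles\<close>])
  then show False
    using order_power_not_dvd_pderiv[OF Q_nonzero] \<open>w0 \<in> poles\<close> by (simp add: q_def poles_def)
qed

lemma g_DERIV_regular:
  assumes "w \<in> regular" "(R has_field_derivative D) (at w)"
  shows "(g has_field_derivative g w * (of_int l / w + two_pi_i * D)) (at w)"
proof -
  have "w \<noteq> 0"
    using assms(1) by (simp add: regular_def)
  have "((\<lambda>w. w powi l) has_field_derivative of_int l * w powi (l - 1) * 1) (at w)"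
    by (rule DERIV_power_int[OF DERIV_ident]) (simp add: \<open>w \<noteq> 0\<close>)
  from DERIV_mult[OF this DERIV_chain2[OF DERIV_exp DERIV_cmult[OF assms(2)]]]
  have "(g has_field_derivative of_int l * w powi (l - 1) * 1 * exp (two_pi_i * R w)
      + exp (two_pi_i * R w) * (two_pi_i * D) * w powi l) (at w)"
    unfolding g_eq[abs_def] .
  moreover have "of_int l * w powi (l - 1) * 1 * exp (two_pi_i * R w)
      + exp (two_pi_i * R w) * (two_pi_i * D) * w powi l = g w * (of_int l / w + two_pi_i * D)"
    using \<open>w \<noteq> 0\<close> by (simp add: g_eq power_int_diff field_simps)
  ultimately show ?thesis
    by (simp only:)
qed

lemma crit_poly_root_of_crit_pt:
  assumes "w \<in> regular" "crit_pt H (Some w)"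
  shows "poly crit_poly w = 0"
proof -
  have "w \<noteq> 0" "poly Q w \<noteq> 0"
    using assms(1) by (auto simp: regular_def)
  have local_g: "eventually (\<lambda>u. chart (H (Some w)) (H (Some u)) = g u) (nhds w)"
    using eventually_nhds_in_open[OF open_regular assms(1)]
    by eventually_elim (simp add: H_regular assms(1) chart_def)
  have g_crit: "(g has_field_derivative 0) (at w)"
    using sph_deriv_Some_iff_local[OF local_g] assms(2) by (simp add: crit_pt_def)
  define D where
    "D = (poly (pderiv P) w * poly Q w - poly P w * poly (pderiv Q) w) / (poly Q w * poly Q w)"
  have "(R has_field_derivative D) (at w)"
    unfolding ratf_def[abs_def] D_def
    by (rule DERIV_divide[OF poly_DERIV poly_DERIV \<open>poly Q w \<noteq> 0\<close>])
  from DERIV_unique[OF g_DERIV_regular[OF assms(1) this] g_crit]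
  have "of_int l / w + two_pi_i * D = 0"
    using \<open>w \<noteq> 0\<close> by (simp add: g_eq)
  moreover have "poly crit_poly w = w * (poly Q w)\<^sup>2 * (of_int l / w + two_pi_i * D)"
    using \<open>w \<noteq> 0\<close> \<open>poly Q w \<noteq> 0\<close> by (simp add: crit_poly_def D_def field_simps power2_eq_square)
  ultimately show ?thesis
    by simp
qed

lemma finite_crit_pts: "finite {p. p \<notin> ess_sings g \<and> crit_pt H p}"
proof (rule finite_subset)
  show "{p. p \<notin> ess_sings g \<and> crit_pt H p} \<subseteq> {None, Some 0} \<union> Some ` {w. poly crit_poly w = 0}"
  proof
    fix p assume p: "p \<in> {p. p \<notin> ess_sings g \<and> crit_pt H p}"
    show "p \<in> {None, Some 0} \<union> Some ` {w. poly crit_poly w = 0}"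
    proof (cases p)
      case (Some w)
      show ?thesis
      proof (cases "w = 0")
        case False
        then have "w \<in> regular"
          using p Some by (auto simp: ess_sings_eq regular_eq)
        then have "poly crit_poly w = 0"
          using crit_poly_root_of_crit_pt p Some by blast
        then show ?thesis
          using Some by blast
      qed (simp add: Some)
    qed simp
  qed
  show "finite ({None, Some 0} \<union> Some ` {w. poly crit_poly w = 0})"
    using poly_roots_finite[OF crit_poly_nonzero] by simp
qed

lemma finite_type_g: "finite_type g"
proof -
  have "crit_vals g = H ` {p. p \<notin> ess_sings g \<and> crit_pt H p}"
    unfolding crit_vals_def by blast
  then have "finite (crit_vals g)"
    using finite_crit_pts by simp
  then have finite_sing_vals: "finite (crit_vals g \<union> asym_vals g)"
    by (simp add: asym_vals_eq)
  show ?thesis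
    unfolding finite_type_def
    by (rule finite_subset[OF sph_closure_finite_subset[OF finite_sing_vals] finite_sing_vals])
qed

section \<open>The points 0 and \<infinity>\<close>

lemma eventually_H_near_0: "eventually (\<lambda>u. u \<noteq> 0 \<longrightarrow> H (Some u) = Some (g u)) (nhds 0)"
  using eventually_regular_at[of 0] unfolding eventually_at_filter
  by eventually_elim (simp add: H_regular)

lemma eventually_H_near_infinity:
  "eventually (\<lambda>u. u \<noteq> 0 \<longrightarrow> H (Some (inverse u)) = Some (g (inverse u))) (nhds 0)"
proof -
  have "eventually (\<lambda>u. inverse u \<in> regular) (at 0)"
    using eventually_regular_at_infinity by (simp add: at_to_infinity eventually_filtermap)
  then show ?thesis
    unfolding eventually_at_filter by eventually_elim (simp add: H_regular)
qed

lemma sph_deriv_H_0_nonneg: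
  assumes "l \<ge> 0"
  shows "sph_deriv H (Some 0) D \<longleftrightarrow> (g has_field_derivative D) (at 0)"
proof (rule sph_deriv_Some_iff_local)
  show "eventually (\<lambda>u. chart (H (Some 0)) (H (Some u)) = g u) (nhds 0)"
    using eventually_H_near_0 by eventually_elim (auto simp: chart_def H_0_nonneg[OF assms])
qed

lemma sph_deriv_H_0_neg:
  assumes "l < 0"
  shows "sph_deriv H (Some 0) D
    \<longleftrightarrow> ((\<lambda>u. u powi (- l) * exp (- two_pi_i * R u)) has_field_derivative D) (at 0)"
proof (rule sph_deriv_Some_iff_local)
  show "eventually (\<lambda>u. chart (H (Some 0)) (H (Some u))
      = u powi (- l) * exp (- two_pi_i * R u)) (nhds 0)"
    using eventually_H_near_0
    by eventually_elim
      (use assms in \<open>auto simp: chart_def H_0_neg g_eq power_int_minus exp_minus\<close>)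
qed

lemma sph_deriv_H_infinity_pos:
  assumes "l > 0"
  shows "sph_deriv H None D
    \<longleftrightarrow> ((\<lambda>u. u powi l * exp (- two_pi_i * R_inf u)) has_field_derivative D) (at 0)"
proof (rule sph_deriv_None_iff_local)
  show "eventually (\<lambda>u. chart (H None) (H (if u = 0 then None else Some (inverse u)))
      = u powi l * exp (- two_pi_i * R_inf u)) (nhds 0)"
    using eventually_H_near_infinity
    by eventually_elim
      (use assms in \<open>auto simp: chart_def H_inf_pos g_inverse_eq power_int_minus exp_minus\<close>)
qed

lemma sph_deriv_H_infinity_nonpos:
  assumes "l \<le> 0"
  shows "sph_deriv H None D
    \<longleftrightarrow> ((\<lambda>u. u powi (- l) * exp (two_pi_i * R_inf u)) has_field_derivative D) (at 0)"
proof (rule sph_deriv_None_iff_local)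
  show "eventually (\<lambda>u. chart (H None) (H (if u = 0 then None else Some (inverse u)))
      = u powi (- l) * exp (two_pi_i * R_inf u)) (nhds 0)"
    using eventually_H_near_infinity
    by eventually_elim (auto simp: chart_def H_inf_nonpos[OF assms] g_inverse_eq)
qed

lemma sph_deriv_ratf_0: "sph_deriv (sph_ext R) (Some 0) D \<longleftrightarrow> (R has_field_derivative D) (at 0)"
proof (rule sph_deriv_Some_iff_local)
  have "eventually (\<lambda>u. u \<notin> poles) (nhds 0)"
    using eventually_nhds_in_open[of "- poles" 0] zero_notin_poles finite_poles
    by (simp add: finite_imp_closed open_Compl)
  then show "eventually (\<lambda>u. chart (sph_ext R (Some 0)) (sph_ext R (Some u)) = R u) (nhds 0)"
    by eventually_elim (use zero_notin_poles in \<open>simp add: sph_ext_Some_isCont R_isCont chart_def\<close>)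
qed

lemma sph_deriv_ratf_infinity:
  "sph_deriv (sph_ext R) None D \<longleftrightarrow> (R_inf has_field_derivative D) (at 0)"
proof (rule sph_deriv_None_iff_local)
  have "eventually (\<lambda>u. inverse u \<in> regular) (at 0)"
    using eventually_regular_at_infinity by (simp add: at_to_infinity eventually_filtermap)
  then show "eventually (\<lambda>u. chart (sph_ext R None)
      (sph_ext R (if u = 0 then None else Some (inverse u))) = R_inf u) (nhds 0)"
    unfolding eventually_at_filter
    by eventually_elim
      (auto simp: sph_ext_None_eq_Some[OF R_inverse_tendsto] sph_ext_Some_isCont R_isCont
        R_inf_eq chart_def regular_def poles_def)
qed

lemma fixed_points_l_eq_1:
  assumes "l = 1"
  shows "H (Some 0) = Some 0
    \<and> sph_deriv H (Some 0) (exp (2 * of_real pi * \<i> * R 0))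
    \<and> H None = None
    \<and> sph_deriv H None (exp (- 2 * of_real pi * \<i> * Lim at_infinity R))"
proof (intro conjI)
  show "H (Some 0) = Some 0"
    using H_0_nonneg assms unfolding g_eq by simp
  have "(g has_field_derivative exp (two_pi_i * R 0)) (at 0)"
    using DERIV_power_int_mult_exp_at_0[OF R_field_differentiable_0, of l two_pi_i]
      assms unfolding g_eq[abs_def] by simp
  then show "sph_deriv H (Some 0) (exp (2 * of_real pi * \<i> * R 0))"
    using sph_deriv_H_0_nonneg assms by (simp add: two_pi_i_def)
  show "H None = None"
    using H_inf_pos assms by simp
  have "((\<lambda>u. u powi l * exp (- two_pi_i * R_inf u))
      has_field_derivative exp (- two_pi_i * R_inf 0)) (at 0)"
    using DERIV_power_int_mult_exp_at_0[OF R_inf_field_differentiable, of l "- two_pi_i"] assms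
    by simp
  then show "sph_deriv H None (exp (- 2 * of_real pi * \<i> * Lim at_infinity R))"
    using sph_deriv_H_infinity_pos assms by (simp add: Lim_at_infinity_R two_pi_i_def)
qed

lemma superattracting_l_ge_2:
  assumes "l \<ge> 2"
  shows "H (Some 0) = Some 0 \<and> crit_pt H (Some 0) \<and> H None = None \<and> crit_pt H None"
proof (intro conjI)
  show "H (Some 0) = Some 0"
    using H_0_nonneg assms unfolding g_eq by simp
  have "(g has_field_derivative 0) (at 0)"
    using DERIV_power_int_mult_exp_at_0[OF R_field_differentiable_0, of l two_pi_i]
      assms unfolding g_eq[abs_def] by simp
  then show "crit_pt H (Some 0)"
    using sph_deriv_H_0_nonneg assms by (simp add: crit_pt_def)
  show "H None = None"
    using H_inf_pos assms by simp
  have "((\<lambda>u. u powi l * exp (- two_pi_i * R_inf u)) has_field_derivative 0) (at 0)"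
    using DERIV_power_int_mult_exp_at_0[OF R_inf_field_differentiable, of l "- two_pi_i"] assms
    by simp
  then show "crit_pt H None"
    using sph_deriv_H_infinity_pos assms by (simp add: crit_pt_def)
qed

lemma two_cycle_0_infinity:
  assumes "l < 0"
  shows "H (Some 0) = None \<and> H None = Some 0"
  using H_0_neg H_inf_nonpos assms by (simp add: power_int_0_left_if)

lemma critical_two_cycle_l_le_minus_2:
  assumes "l \<le> -2"
  shows "H (Some 0) = None \<and> H None = Some 0 \<and> (crit_pt H (Some 0) \<or> crit_pt H None)"
proof -
  have "((\<lambda>u. u powi (- l) * exp (- two_pi_i * R u)) has_field_derivative 0) (at 0)"
    using DERIV_power_int_mult_exp_at_0[OF R_field_differentiable_0, of "- l" "- two_pi_i"]
      assms by simp
  then have "crit_pt H (Some 0)"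
    using sph_deriv_H_0_neg assms by (simp add: crit_pt_def)
  then show ?thesis
    using two_cycle_0_infinity assms by simp
qed

text \<open>For l = -1, H maps u near 0 to 1 / \<psi> u with \<psi> u = u exp (-2 pi i R u), and then to the point
  with coordinate \<psi> u exp (2 pi i R_inf (\<psi> u)) near 0.\<close>
lemma eventually_H_H_near_0:
  assumes "l = -1"
  shows "eventually (\<lambda>u. chart (H (H (Some 0))) (H (H (Some u)))
    = u * exp (- two_pi_i * R u) * exp (two_pi_i * R_inf (u * exp (- two_pi_i * R u)))) (nhds 0)"
proof -
  define \<psi> where "\<psi> u = u * exp (- two_pi_i * R u)" for u
  have "isCont \<psi> 0"
    unfolding \<psi>_def using R_isCont[OF zero_notin_poles] by (intro continuous_intros)
  moreover have "\<psi> 0 = 0"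
    by (simp add: \<psi>_def)
  ultimately have "(\<psi> \<longlongrightarrow> 0) (nhds 0)"
    using tendsto_at_iff_tendsto_nhds[of \<psi> 0] by (simp add: isCont_def)
  then have "eventually (\<lambda>u. \<psi> u \<noteq> 0 \<longrightarrow>
      H (Some (inverse (\<psi> u))) = Some (g (inverse (\<psi> u)))) (nhds 0)"
    by (rule eventually_compose_filterlim[OF eventually_H_near_infinity])
  then have "eventually (\<lambda>u. chart (H (H (Some 0))) (H (H (Some u)))
      = \<psi> u * exp (two_pi_i * R_inf (\<psi> u))) (nhds 0)"
    using eventually_H_near_0
  proof eventually_elim
    case (elim u)
    have H_0_inf: "H (Some 0) = None" "H None = Some 0"
      using two_cycle_0_infinity assms by simp_all
    show ?case
    proof (cases "u = 0")
      case False
      then have "\<psi> u \<noteq> 0" and "g u = inverse (\<psi> u)"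
        unfolding g_eq \<psi>_def using assms by (simp_all add: power_int_minus exp_minus)
      moreover have "g (inverse (\<psi> u)) = \<psi> u * exp (two_pi_i * R_inf (\<psi> u))"
        using g_inverse_eq[OF \<open>\<psi> u \<noteq> 0\<close>] assms by simp
      ultimately show ?thesis
        using elim False H_0_inf by (simp add: chart_def)
    qed (use H_0_inf in \<open>simp add: \<psi>_def chart_def\<close>)
  qed
  then show ?thesis
    by (simp add: \<psi>_def)
qed

lemma two_cycle_l_eq_minus_1:
  assumes "l = -1"
  shows "H (Some 0) = None \<and> H None = Some 0
    \<and> sph_deriv (H \<circ> H) (Some 0) (exp (2 * of_real pi * \<i> * (Lim at_infinity R - R 0)))"
proof -
  define \<psi> where "\<psi> u = u powi 1 * exp (- two_pi_i * R u)" for u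
  define \<phi> where "\<phi> v = v powi 1 * exp (two_pi_i * R_inf v)" for v
  have \<psi>_deriv: "(\<psi> has_field_derivative exp (- two_pi_i * R 0)) (at 0)"
    unfolding \<psi>_def[abs_def]
    using DERIV_power_int_mult_exp_at_0[OF R_field_differentiable_0, of 1 "- two_pi_i"]
    by simp
  have "(\<phi> has_field_derivative exp (two_pi_i * R_inf 0)) (at (\<psi> 0))"
    unfolding \<phi>_def[abs_def]
    using DERIV_power_int_mult_exp_at_0[OF R_inf_field_differentiable, of 1 two_pi_i]
    by (simp add: \<psi>_def)
  from DERIV_chain[OF this \<psi>_deriv]
  have "((\<phi> \<circ> \<psi>) has_field_derivative exp (2 * of_real pi * \<i> * (Lim at_infinity R - R 0))) (at 0)"
    by (simp add: Lim_at_infinity_R two_pi_i_def mult_exp_exp algebra_simps)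
  moreover have "eventually (\<lambda>u. chart ((H \<circ> H) (Some 0)) ((H \<circ> H) (Some u)) = (\<phi> \<circ> \<psi>) u)
      (nhds 0)"
    using eventually_H_H_near_0[OF assms] by (simp add: \<phi>_def \<psi>_def)
  ultimately have "sph_deriv (H \<circ> H) (Some 0) (exp (2 * of_real pi * \<i> * (Lim at_infinity R - R 0)))"
    using sph_deriv_Some_iff_local by blast
  with two_cycle_0_infinity assms show ?thesis
    by simp
qed

lemma critical_points_l_eq_0:
  assumes "l = 0"
  shows "(crit_pt H (Some 0) \<longleftrightarrow> sph_deriv (sph_ext R) (Some 0) 0)
    \<and> (crit_pt H None \<longleftrightarrow> sph_deriv (sph_ext R) None 0)"
proof
  have "crit_pt H (Some 0) \<longleftrightarrow> (g has_field_derivative 0) (at 0)"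
    using sph_deriv_H_0_nonneg assms by (simp add: crit_pt_def)
  also have "\<dots> \<longleftrightarrow> ((\<lambda>u. exp (two_pi_i * R u)) has_field_derivative 0) (at 0)"
    unfolding g_eq[abs_def] using assms by simp
  also have "\<dots> \<longleftrightarrow> sph_deriv (sph_ext R) (Some 0) 0"
    using DERIV_exp_cmult_eq_0_iff[OF R_field_differentiable_0 two_pi_i_nonzero]
    by (simp add: sph_deriv_ratf_0)
  finally show "crit_pt H (Some 0) \<longleftrightarrow> sph_deriv (sph_ext R) (Some 0) 0" .
  have "crit_pt H None \<longleftrightarrow> ((\<lambda>u. exp (two_pi_i * R_inf u)) has_field_derivative 0) (at 0)"
    using sph_deriv_H_infinity_nonpos assms by (simp add: crit_pt_def)
  also have "\<dots> \<longleftrightarrow> sph_deriv (sph_ext R) None 0"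
    using DERIV_exp_cmult_eq_0_iff[OF R_inf_field_differentiable two_pi_i_nonzero]
    by (simp add: sph_deriv_ratf_infinity)
  finally show "crit_pt H None \<longleftrightarrow> sph_deriv (sph_ext R) None 0" .
qed

end

theorem corollary3p11:
  fixes P Q :: "complex poly" and l :: int
  assumes "Q \<noteq> 0" and "coprime P Q"
    and "poly Q 0 \<noteq> 0"
    and "degree P \<le> degree Q"
    and "\<exists>w. poly Q w = 0"
    and "\<not> (\<exists>c. \<forall>w. poly Q w \<noteq> 0 \<longrightarrow> ratf P Q w = c)"
  shows "finite_type (gproj l P Q)
    \<and> asym_vals (gproj l P Q) = {Some 0, None}
    \<and> ess_sings (gproj l P Q) = Some ` exp1 ` {z. sph_ext (fR l P Q) (Some z) = None}
    \<and> (l = 1 \<longrightarrow>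
          sph_ext (gproj l P Q) (Some 0) = Some 0
        \<and> sph_deriv (sph_ext (gproj l P Q)) (Some 0) (exp (2 * of_real pi * \<i> * ratf P Q 0))
        \<and> sph_ext (gproj l P Q) None = None
        \<and> sph_deriv (sph_ext (gproj l P Q)) None
            (exp (- 2 * of_real pi * \<i> * Lim at_infinity (ratf P Q))))
    \<and> (l \<ge> 2 \<longrightarrow>
          sph_ext (gproj l P Q) (Some 0) = Some 0 \<and> crit_pt (sph_ext (gproj l P Q)) (Some 0)
        \<and> sph_ext (gproj l P Q) None = None \<and> crit_pt (sph_ext (gproj l P Q)) None)
    \<and> (l = -1 \<longrightarrow>
          sph_ext (gproj l P Q) (Some 0) = None \<and> sph_ext (gproj l P Q) None = Some 0
        \<and> sph_deriv (sph_ext (gproj l P Q) \<circ> sph_ext (gproj l P Q)) (Some 0)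
            (exp (2 * of_real pi * \<i> * (Lim at_infinity (ratf P Q) - ratf P Q 0))))
    \<and> (l \<le> -2 \<longrightarrow>
          sph_ext (gproj l P Q) (Some 0) = None \<and> sph_ext (gproj l P Q) None = Some 0
        \<and> (crit_pt (sph_ext (gproj l P Q)) (Some 0) \<or> crit_pt (sph_ext (gproj l P Q)) None))
    \<and> (l = 0 \<longrightarrow>
          (crit_pt (sph_ext (gproj l P Q)) (Some 0) \<longleftrightarrow> sph_deriv (sph_ext (ratf P Q)) (Some 0) 0)
        \<and> (crit_pt (sph_ext (gproj l P Q)) None \<longleftrightarrow> sph_deriv (sph_ext (ratf P Q)) None 0))"
proof -
  interpret exp_projection P Q l
    using assms(1-5) by unfold_locales
  have "ess_sings (gproj l P Q) = Some ` exp1 ` {z. sph_ext (fR l P Q) (Some z) = None}"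
    by (simp only: ess_sings_eq fR_poles exp1_image_vimage_poles)
  then show ?thesis
    using finite_type_g asym_vals_eq fixed_points_l_eq_1 superattracting_l_ge_2
      two_cycle_l_eq_minus_1 critical_two_cycle_l_le_minus_2 critical_points_l_eq_0
    by blast
qed

end
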